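(* Let $q$ be an acyclic Boolean conjunctive query such that each cycle of the attack graph of $q$ is terminal and each atom of $q$ belongs to a cycle of the attack graph. Then: (1) if the same variable $x$ occurs in (atoms of) two distinct cycles of the attack graph, then $x\in\mathit{key}(F)$ for each atom $F$ in these cycles; (2) if $F\to G$ is a weak attack, then $\mathit{key}(G)\subseteq\mathit{vars}(F)$.
   Context: Atoms have variables or constants as arguments; each relation name has a signature $[n,k]$ with primary key positions $1,\dots,k$. $\mathit{key}(F)$ is the set of variables in the primary-key positions of atom $F$, $\mathit{vars}(F)$ its set of variables. A Boolean conjunctive query $q$ is a finite set of atoms; $\mathit{vars}(q)$ its variables. A join tree for $q$ is an undirected tree on the atoms of $q$ such that whenever a variable occurs in atoms $F$ and $G$ it occurs in every atom on the path between them; the edge between $F$ and $G$ is labeled $\mathit{vars}(F)\cap\mathit{vars}(G)$. $q$ is acyclic if it has a join tree. $\mathit{FD}(q)=\{\mathit{key}(F)\to\mathit{vars}(F)\mid F\in q\}$; $F^{+,q}=\{x\in\mathit{vars}(q)\mid \mathit{FD}(q\setminus\{F\})\models\mathit{key}(F)\to x\}$; $F^{\oplus,q}=\{x\in\mathit{vars}(q)\mid \mathit{FD}(q)\models\mathit{key}(F)\to x\}$. The attack graph of $q$, computed from any join tree $\tau$ (independent of the choice), has an edge (attack) $F\to G$ for distinct atoms iff every label $L$ on the path between $F$ and $G$ in $\tau$ satisfies $L\not\subseteq F^{+,q}$. An attack $F\to G$ is weak if $\mathit{key}(G)\subseteq F^{\oplus,q}$. A cycle is a sequence of edges $F_0\to\dots\to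 F_{n-1}\to F_0$ with pairwise distinct $F_i$; it is terminal if there is no edge from a vertex of the cycle to a vertex outside the cycle. *)

theory Defs
  imports Main
begin

datatype ('v, 'c) arg = Var 'v | Cst 'c

text \<open>An atom is a relation name together with its list of arguments.
  A signature assigns to each relation name a pair (n, k): arity n, primary key
  positions 1..k.\<close>
type_synonym ('r, 'v, 'c) atom = "'r \<times> ('v, 'c) arg list"

type_synonym 'r signature = "'r \<Rightarrow> nat \<times> nat"

definition wf_atom :: "'r signature \<Rightarrow> ('r, 'v, 'c) atom \<Rightarrow> bool" where
  "wf_atom sig F \<longleftrightarrow> length (snd F) = fst (sig (fst F))
      \<and> 1 \<le> snd (sig (fst F)) \<and> snd (sig (fst F)) \<le> fst (sig (fst F))"

definition wf_query :: "'r signature \<Rightarrow> ('r, 'v, 'c) atom set \<Rightarrow> bool" where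
  "wf_query sig q \<longleftrightarrow> finite q \<and> (\<forall>F\<in>q. wf_atom sig F)"

definition avars :: "('r, 'v, 'c) atom \<Rightarrow> 'v set" where
  "avars F = {v. Var v \<in> set (snd F)}"

definition akey :: "'r signature \<Rightarrow> ('r, 'v, 'c) atom \<Rightarrow> 'v set" where
  "akey sig F = {v. Var v \<in> set (take (snd (sig (fst F))) (snd F))}"

definition qvars :: "('r, 'v, 'c) atom set \<Rightarrow> 'v set" where
  "qvars q = (\<Union>F\<in>q. avars F)"

definition FD :: "'r signature \<Rightarrow> ('r, 'v, 'c) atom set \<Rightarrow> ('v set \<times> 'v set) set" where
  "FD sig q = {(akey sig F, avars F) | F. F \<in> q}"

inductive_set fd_closure :: "('v set \<times> 'v set) set \<Rightarrow> 'v set \<Rightarrow> 'v set"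
  for \<Sigma> :: "('v set \<times> 'v set) set" and X :: "'v set" where
  base: "x \<in> X \<Longrightarrow> x \<in> fd_closure \<Sigma> X"
| step: "(L, R) \<in> \<Sigma> \<Longrightarrow> (\<forall>z\<in>L. z \<in> fd_closure \<Sigma> X) \<Longrightarrow> y \<in> R \<Longrightarrow> y \<in> fd_closure \<Sigma> X"

definition fd_entails :: "('v set \<times> 'v set) set \<Rightarrow> 'v set \<Rightarrow> 'v \<Rightarrow> bool" where
  "fd_entails \<Sigma> X x \<longleftrightarrow> x \<in> fd_closure \<Sigma> X"

definition Fplus :: "'r signature \<Rightarrow> ('r, 'v, 'c) atom set \<Rightarrow> ('r, 'v, 'c) atom \<Rightarrow> 'v set" where
  "Fplus sig q F = {x \<in> qvars q. fd_entails (FD sig (q - {F})) (akey sig F) x}"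

definition Foplus :: "'r signature \<Rightarrow> ('r, 'v, 'c) atom set \<Rightarrow> ('r, 'v, 'c) atom \<Rightarrow> 'v set" where
  "Foplus sig q F = {x \<in> qvars q. fd_entails (FD sig q) (akey sig F) x}"

definition tree_path :: "('a \<times> 'a) set \<Rightarrow> 'a \<Rightarrow> 'a \<Rightarrow> 'a list \<Rightarrow> bool" where
  "tree_path E F G ps \<longleftrightarrow> ps \<noteq> [] \<and> hd ps = F \<and> last ps = G \<and> distinct ps
      \<and> (\<forall>i. Suc i < length ps \<longrightarrow> (ps ! i, ps ! Suc i) \<in> E)"

definition is_tree :: "'a set \<Rightarrow> ('a \<times> 'a) set \<Rightarrow> bool" where
  "is_tree V E \<longleftrightarrow> E \<subseteq> V \<times> V \<and> sym E \<and> (\<forall>x. (x, x) \<notin> E)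
      \<and> (\<forall>F\<in>V. \<forall>G\<in>V. \<exists>!ps. tree_path E F G ps)"

definition join_tree :: "('r, 'v, 'c) atom set \<Rightarrow> (('r, 'v, 'c) atom \<times> ('r, 'v, 'c) atom) set \<Rightarrow> bool" where
  "join_tree q \<tau> \<longleftrightarrow> is_tree q \<tau>
      \<and> (\<forall>F\<in>q. \<forall>G\<in>q. \<forall>ps. tree_path \<tau> F G ps \<longrightarrow>
            (\<forall>x. x \<in> avars F \<and> x \<in> avars G \<longrightarrow> (\<forall>H\<in>set ps. x \<in> avars H)))"

definition acyclic_query :: "('r, 'v, 'c) atom set \<Rightarrow> bool" where
  "acyclic_query q \<longleftrightarrow> (\<exists>\<tau>. join_tree q \<tau>)"

definition attacks :: "'r signature \<Rightarrow> ('r, 'v, 'c) atom set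
    \<Rightarrow> (('r, 'v, 'c) atom \<times> ('r, 'v, 'c) atom) set
    \<Rightarrow> ('r, 'v, 'c) atom \<Rightarrow> ('r, 'v, 'c) atom \<Rightarrow> bool" where
  "attacks sig q \<tau> F G \<longleftrightarrow> F \<in> q \<and> G \<in> q \<and> F \<noteq> G
      \<and> (\<forall>ps. tree_path \<tau> F G ps \<longrightarrow>
            (\<forall>i. Suc i < length ps \<longrightarrow>
                 \<not> (avars (ps ! i) \<inter> avars (ps ! Suc i) \<subseteq> Fplus sig q F)))"

definition weak_attack :: "'r signature \<Rightarrow> ('r, 'v, 'c) atom set
    \<Rightarrow> (('r, 'v, 'c) atom \<times> ('r, 'v, 'c) atom) set
    \<Rightarrow> ('r, 'v, 'c) atom \<Rightarrow> ('r, 'v, 'c) atom \<Rightarrow> bool" where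
  "weak_attack sig q \<tau> F G \<longleftrightarrow> attacks sig q \<tau> F G \<and> akey sig G \<subseteq> Foplus sig q F"

definition is_cycle :: "'r signature \<Rightarrow> ('r, 'v, 'c) atom set
    \<Rightarrow> (('r, 'v, 'c) atom \<times> ('r, 'v, 'c) atom) set \<Rightarrow> ('r, 'v, 'c) atom list \<Rightarrow> bool" where
  "is_cycle sig q \<tau> cs \<longleftrightarrow> cs \<noteq> [] \<and> distinct cs
      \<and> (\<forall>i<length cs. attacks sig q \<tau> (cs ! i) (cs ! ((Suc i) mod length cs)))"

definition terminal_cycle :: "'r signature \<Rightarrow> ('r, 'v, 'c) atom set
    \<Rightarrow> (('r, 'v, 'c) atom \<times> ('r, 'v, 'c) atom) set \<Rightarrow> ('r, 'v, 'c) atom list \<Rightarrow> bool" where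
  "terminal_cycle sig q \<tau> cs \<longleftrightarrow> is_cycle sig q \<tau> cs
      \<and> (\<forall>F\<in>set cs. \<forall>G. attacks sig q \<tau> F G \<longrightarrow> G \<in> set cs)"

end

theory Submission
  imports Defs "HOL-Library.Transitive_Closure_Table"
begin

text \<open>
  If every atom lies on a cycle of the attack graph and every cycle is terminal, then every atom
  attacks exactly one atom, its successor on its cycle, and is attacked by some atom.
  Attacks spread along shared variables: if F attacks A, and w \<in> vars(A) \<inter> vars(B) with
  w \<notin> F^{+,q}, then F also attacks B, since every label on the join-tree path from A to B
  contains w. Hence F^{+,q} \<subseteq> key(F): a dependency key(H) \<rightarrow> vars(H) with H \<noteq> F firing
  inside the closure of key(F) would make the attacker of H attack F as well, forcing H = F.
  For (1), a variable x shared with another cycle and missing from key(E) for some E on the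
  cycle would let E attack the other cycle, contradicting terminality; so x passes backwards
  along the cycle into every key. For (2), induct over the derivation of y \<in> key(G) from key(F)
  under FD(q): if y \<notin> vars(F), the atom whose dependency produced y is attacked by F through y,
  hence is G, and y was already derived before.
\<close>

lemma rtrancl_path_iff_successively:
  "rtrancl_path r x xs y \<longleftrightarrow> successively r (x # xs) \<and> last (x # xs) = y"
proof (induction xs arbitrary: x)
  case Nil
  show ?case by (auto elim: rtrancl_path.cases intro: rtrancl_path.base)
next
  case (Cons z zs)
  have "rtrancl_path r x (z # zs) y \<longleftrightarrow> r x z \<and> rtrancl_path r z zs y"
    by (auto elim: rtrancl_path.cases intro: rtrancl_path.step)
  then show ?case using Cons.IH by simp
qed

lemma rtranclp_if_successively:
  "successively r (x # xs) \<Longrightarrow> y \<in> set (x # xs) \<Longrightarrow> r\<^sup>*\<^sup>* x y"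
  by (induction xs arbitrary: x) (auto simp: successively_Cons intro: converse_rtranclp_into_rtranclp)

definition graph_cycle :: "('a \<Rightarrow> 'a \<Rightarrow> bool) \<Rightarrow> 'a list \<Rightarrow> bool" where
  "graph_cycle r cs \<longleftrightarrow> cs \<noteq> [] \<and> distinct cs \<and> successively r (cs @ [hd cs])"

lemma graph_cycle_conv_nth:
  "graph_cycle r cs \<longleftrightarrow>
     cs \<noteq> [] \<and> distinct cs \<and> (\<forall>i<length cs. r (cs ! i) (cs ! (Suc i mod length cs)))"
proof (cases "cs = []")
  case False
  have "(cs @ [hd cs]) ! i = cs ! i" if "i < length cs" for i
    using that by (simp add: nth_append)
  moreover have "(cs @ [hd cs]) ! Suc i = cs ! (Suc i mod length cs)" if "i < length cs" for i
  proof (cases "Suc i < length cs")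
    case False
    then have "Suc i = length cs" using that by simp
    then show ?thesis using \<open>cs \<noteq> []\<close> by (simp add: nth_append hd_conv_nth)
  qed (simp add: nth_append)
  ultimately show ?thesis
    using False by (simp add: graph_cycle_def successively_conv_nth)
qed (simp add: graph_cycle_def)

lemma graph_cycle_rotate:
  assumes "graph_cycle r cs" "x \<in> set cs"
  obtains xs where "graph_cycle r (x # xs)" "set (x # xs) = set cs"
proof -
  obtain us vs where cs: "cs = us @ x # vs" using split_list assms(2) by metis
  have "graph_cycle r (x # vs @ us)"
    using assms(1) unfolding cs graph_cycle_def
    by (auto simp: successively_append_iff successively_Cons hd_append)
  then show ?thesis by (rule that) (auto simp: cs)
qed

lemma graph_cycle_successor:
  assumes "graph_cycle r (x # xs)"
  shows "r x (hd (xs @ [x]))" and "r (last (x # xs)) x"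
  using assms by (cases xs; auto simp: graph_cycle_def successively_append_iff successively_Cons)+

lemma graph_cycle_neighbours:
  assumes "graph_cycle r cs" "x \<in> set cs"
  shows "\<exists>y\<in>set cs. r x y" and "\<exists>y\<in>set cs. r y x"
proof -
  obtain xs where "graph_cycle r (x # xs)" "set (x # xs) = set cs"
    using graph_cycle_rotate assms .
  moreover have "hd (xs @ [x]) \<in> set (x # xs)" and "last (x # xs) \<in> set (x # xs)"
    by (cases xs; simp)+
  ultimately show "\<exists>y\<in>set cs. r x y" and "\<exists>y\<in>set cs. r y x"
    using graph_cycle_successor[of r x xs] by metis+
qed

lemma graph_cycle_rtranclp:
  assumes "graph_cycle r cs" "x \<in> set cs" "y \<in> set cs"
  shows "r\<^sup>*\<^sup>* x y"
proof -
  obtain xs where "graph_cycle r (x # xs)" "set (x # xs) = set cs"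
    using graph_cycle_rotate assms(1,2) .
  then show ?thesis
    using rtranclp_if_successively[of r x "xs @ [x]"] assms(3)
    by (auto simp: graph_cycle_def)
qed

lemma graph_cycle_subset_closed:
  assumes "graph_cycle r cs" "x \<in> set cs" "x \<in> S" and closed: "\<forall>a\<in>S. \<forall>b. r a b \<longrightarrow> b \<in> S"
  shows "set cs \<subseteq> S"
proof
  fix y assume "y \<in> set cs"
  with assms(1,2) have "r\<^sup>*\<^sup>* x y" by (rule graph_cycle_rtranclp)
  then show "y \<in> S" using assms(3) closed by induction auto
qed

lemma graph_cycle_successor_unique:
  assumes terminal: "\<And>cs. graph_cycle r cs \<Longrightarrow> \<forall>a\<in>set cs. \<forall>b. r a b \<longrightarrow> b \<in> set cs"
    and irrefl: "\<And>a. \<not> r a a"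
    and cycle: "graph_cycle r (x # xs)" and "r x y"
  shows "y = hd (xs @ [x])"
  \<comment> \<open>A chord x \<rightarrow> y skipping the successor u of x closes a shorter cycle without u, which
    terminality forces to contain u.\<close>
proof -
  have "y \<in> set xs"
    using terminal cycle \<open>r x y\<close> irrefl by (metis list.set_intros(1) set_ConsD)
  then obtain us vs where xs: "xs = us @ y # vs" by (meson split_list)
  show ?thesis
  proof (cases us)
    case Nil then show ?thesis using xs by simp
  next
    case (Cons u us')
    have "graph_cycle r (x # y # vs)"
      using cycle \<open>r x y\<close> unfolding graph_cycle_def xs
      by (auto simp: successively_append_iff successively_Cons)
    moreover have "r x u"
      using graph_cycle_successor(1)[OF cycle] xs Cons by simp
    ultimately have "u \<in> set (x # y # vs)" using terminal[of "x # y # vs"] by simp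
    moreover have "u \<notin> set (x # y # vs)" using cycle unfolding graph_cycle_def xs Cons by auto
    ultimately show ?thesis by contradiction
  qed
qed

lemma graph_cycle_functional:
  assumes terminal: "\<And>cs. graph_cycle r cs \<Longrightarrow> \<forall>a\<in>set cs. \<forall>b. r a b \<longrightarrow> b \<in> set cs"
    and irrefl: "\<And>a. \<not> r a a"
    and "graph_cycle r cs" "x \<in> set cs" "r x y" "r x z"
  shows "y = z"
proof -
  obtain xs where "graph_cycle r (x # xs)"
    using graph_cycle_rotate assms(3,4) .
  then show ?thesis
    using graph_cycle_successor_unique[OF terminal irrefl] assms(5,6) by metis
qed

lemma is_cycle_eq_graph_cycle: "is_cycle sig q \<tau> = graph_cycle (attacks sig q \<tau>)"
  by (simp add: fun_eq_iff is_cycle_def graph_cycle_conv_nth)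

lemma tree_path_conv_successively:
  "tree_path E F G ps \<longleftrightarrow>
     ps \<noteq> [] \<and> hd ps = F \<and> last ps = G \<and> distinct ps \<and> successively (\<lambda>X Y. (X, Y) \<in> E) ps"
  by (simp add: tree_path_def successively_conv_nth)

lemma akey_subset_avars: "akey sig F \<subseteq> avars F"
  by (auto simp: akey_def avars_def dest: in_set_takeD)

definition open_edge :: "'r signature \<Rightarrow> ('r, 'v, 'c) atom set
    \<Rightarrow> (('r, 'v, 'c) atom \<times> ('r, 'v, 'c) atom) set
    \<Rightarrow> ('r, 'v, 'c) atom \<Rightarrow> ('r, 'v, 'c) atom \<Rightarrow> ('r, 'v, 'c) atom \<Rightarrow> bool" where
  "open_edge sig q \<tau> F X Y \<longleftrightarrow> (X, Y) \<in> \<tau> \<and> \<not> avars X \<inter> avars Y \<subseteq> Fplus sig q F"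

lemma attacks_iff_rtranclp_open_edge:
  assumes tree: "is_tree q \<tau>" and "F \<in> q" "G \<in> q" "F \<noteq> G"
  shows "attacks sig q \<tau> F G \<longleftrightarrow> (open_edge sig q \<tau> F)\<^sup>*\<^sup>* F G"
proof -
  have open_path: "(\<forall>i. Suc i < length ps \<longrightarrow> \<not> avars (ps ! i) \<inter> avars (ps ! Suc i) \<subseteq> Fplus sig q F)
      \<longleftrightarrow> successively (open_edge sig q \<tau> F) ps" if "tree_path \<tau> F G ps" for ps
    using that by (auto simp: tree_path_def open_edge_def successively_conv_nth)
  show ?thesis
  proof
    assume "attacks sig q \<tau> F G"
    moreover obtain ps where ps: "tree_path \<tau> F G ps"
      using tree \<open>F \<in> q\<close> \<open>G \<in> q\<close> unfolding is_tree_def by blast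
    ultimately have "successively (open_edge sig q \<tau> F) ps"
      using open_path unfolding attacks_def by blast
    moreover obtain xs where "ps = F # xs"
      using ps by (cases ps) (auto simp: tree_path_def)
    ultimately show "(open_edge sig q \<tau> F)\<^sup>*\<^sup>* F G"
      using ps rtranclp_if_successively[of _ F xs G] by (auto simp: tree_path_def)
  next
    assume "(open_edge sig q \<tau> F)\<^sup>*\<^sup>* F G"
    then obtain ys where "rtrancl_path (open_edge sig q \<tau> F) F ys G"
      by (auto simp: rtranclp_eq_rtrancl_path)
    then obtain xs where "rtrancl_path (open_edge sig q \<tau> F) F xs G" "distinct (F # xs)"
      by (rule rtrancl_path_distinct)
    then have xs: "successively (open_edge sig q \<tau> F) (F # xs)" "last (F # xs) = G" "distinct (F # xs)"
      by (simp_all add: rtrancl_path_iff_successively)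
    then have "tree_path \<tau> F G (F # xs)"
      unfolding tree_path_conv_successively
      by (auto elim: successively_mono simp: open_edge_def)
    then have "ps = F # xs" if "tree_path \<tau> F G ps" for ps
      using that tree \<open>F \<in> q\<close> \<open>G \<in> q\<close> unfolding is_tree_def by blast
    then show "attacks sig q \<tau> F G"
      using xs(1) open_path assms(2-4) unfolding attacks_def by blast
  qed
qed

lemma attacks_via_shared_var:
  assumes jt: "join_tree q \<tau>" and "attacks sig q \<tau> F A" "B \<in> q" "B \<noteq> F"
    and "w \<in> avars A" "w \<in> avars B" "w \<notin> Fplus sig q F"
  shows "attacks sig q \<tau> F B"
proof -
  have tree: "is_tree q \<tau>" and F: "F \<in> q" and A: "A \<in> q"
    using jt \<open>attacks sig q \<tau> F A\<close> by (auto simp: join_tree_def attacks_def)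
  obtain ps where ps: "tree_path \<tau> A B ps"
    using tree A \<open>B \<in> q\<close> unfolding is_tree_def by blast
  have w: "\<forall>H\<in>set ps. w \<in> avars H"
    using jt ps A \<open>B \<in> q\<close> assms(5,6) unfolding join_tree_def by blast
  have "successively (open_edge sig q \<tau> F) ps"
    unfolding successively_conv_nth
  proof (intro allI impI)
    fix i assume "Suc i < length ps"
    then have "(ps ! i, ps ! Suc i) \<in> \<tau>" "w \<in> avars (ps ! i)" "w \<in> avars (ps ! Suc i)"
      using ps w by (auto simp: tree_path_def)
    then show "open_edge sig q \<tau> F (ps ! i) (ps ! Suc i)"
      using \<open>w \<notin> Fplus sig q F\<close> by (auto simp: open_edge_def)
  qed
  moreover obtain xs where "ps = A # xs" "B \<in> set ps"
    using ps by (cases ps) (auto simp: tree_path_def)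
  ultimately have "(open_edge sig q \<tau> F)\<^sup>*\<^sup>* A B"
    using rtranclp_if_successively by metis
  moreover have "(open_edge sig q \<tau> F)\<^sup>*\<^sup>* F A"
    using attacks_iff_rtranclp_open_edge[OF tree F A] \<open>attacks sig q \<tau> F A\<close>
    by (simp add: attacks_def)
  ultimately show ?thesis
    using attacks_iff_rtranclp_open_edge[OF tree F \<open>B \<in> q\<close>] \<open>B \<noteq> F\<close> by auto
qed

lemma attacks_akey_not_subset_fd_closure:
  assumes tree: "is_tree q \<tau>" and attacks: "attacks sig q \<tau> F G"
  shows "\<not> akey sig G \<subseteq> fd_closure (FD sig (q - {F})) (akey sig F)"
proof
  assume key: "akey sig G \<subseteq> fd_closure (FD sig (q - {F})) (akey sig F)"
  have G: "F \<in> q" "G \<in> q" "F \<noteq> G" using attacks by (auto simp: attacks_def)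
  have "(akey sig G, avars G) \<in> FD sig (q - {F})"
    using G unfolding FD_def by blast
  then have "avars G \<subseteq> fd_closure (FD sig (q - {F})) (akey sig F)"
    using key by (blast intro: fd_closure.step)
  moreover have "avars G \<subseteq> qvars q" using G unfolding qvars_def by blast
  ultimately have "avars G \<subseteq> Fplus sig q F" by (auto simp: Fplus_def fd_entails_def)
  moreover have "(open_edge sig q \<tau> F)\<^sup>*\<^sup>* F G"
    using attacks_iff_rtranclp_open_edge[OF tree G] attacks by simp
  then obtain X where "open_edge sig q \<tau> F X G"
    using \<open>F \<noteq> G\<close> by (blast elim: rtranclp.cases)
  ultimately show False by (auto simp: open_edge_def)
qed

locale terminal_attack_cycles =
  fixes sig :: "'r signature" and q :: "('r, 'v, 'c) atom set"
    and \<tau> :: "(('r, 'v, 'c) atom \<times> ('r, 'v, 'c) atom) set"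
  assumes join_tree: "join_tree q \<tau>"
    and terminal: "\<forall>cs. is_cycle sig q \<tau> cs \<longrightarrow> terminal_cycle sig q \<tau> cs"
    and covered: "\<forall>F\<in>q. \<exists>cs. is_cycle sig q \<tau> cs \<and> F \<in> set cs"
begin

lemma tree: "is_tree q \<tau>"
  using join_tree by (simp add: join_tree_def)

lemma attack_cycle_closed:
  "graph_cycle (attacks sig q \<tau>) cs \<Longrightarrow> \<forall>F\<in>set cs. \<forall>G. attacks sig q \<tau> F G \<longrightarrow> G \<in> set cs"
  using terminal by (simp add: terminal_cycle_def is_cycle_eq_graph_cycle)

lemma attacks_functional:
  assumes "attacks sig q \<tau> F G" "attacks sig q \<tau> F G'"
  shows "G = G'"
proof -
  obtain cs where cycle: "graph_cycle (attacks sig q \<tau>) cs" "F \<in> set cs"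
    using covered assms(1) by (auto simp: attacks_def is_cycle_eq_graph_cycle)
  have irrefl: "\<And>F. \<not> attacks sig q \<tau> F F" by (simp add: attacks_def)
  show ?thesis
    by (rule graph_cycle_functional[OF attack_cycle_closed irrefl cycle assms])
qed

lemma exists_attacker:
  assumes "H \<in> q" shows "\<exists>F. attacks sig q \<tau> F H"
proof -
  obtain cs where "graph_cycle (attacks sig q \<tau>) cs" "H \<in> set cs"
    using covered assms by (auto simp: is_cycle_eq_graph_cycle)
  then show ?thesis using graph_cycle_neighbours(2)[of "attacks sig q \<tau>" cs H] by blast
qed

lemma cycles_eq_if_common_atom:
  assumes "is_cycle sig q \<tau> cs1" "is_cycle sig q \<tau> cs2" "F \<in> set cs1" "F \<in> set cs2"
  shows "set cs1 = set cs2"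
proof -
  have cycles: "graph_cycle (attacks sig q \<tau>) cs1" "graph_cycle (attacks sig q \<tau>) cs2"
    using assms(1,2) by (simp_all add: is_cycle_eq_graph_cycle)
  show ?thesis
    using graph_cycle_subset_closed[OF cycles(1) assms(3,4) attack_cycle_closed[OF cycles(2)]]
      graph_cycle_subset_closed[OF cycles(2) assms(4,3) attack_cycle_closed[OF cycles(1)]]
    by (rule subset_antisym)
qed

lemma Fplus_subset_akey:
  assumes "F \<in> q" shows "Fplus sig q F \<subseteq> akey sig F"
proof -
  have "y \<in> akey sig F" if "y \<in> fd_closure (FD sig (q - {F})) (akey sig F)" for y
    using that
  proof (induction rule: fd_closure.induct)
    case (step L R y)
    obtain H where H: "H \<in> q" "H \<noteq> F" "L = akey sig H"
      using step.hyps(1) unfolding FD_def by blast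
    have key: "akey sig H \<subseteq> akey sig F" using step.IH H(3) by blast
    obtain P where P: "attacks sig q \<tau> P H" using exists_attacker H(1) by blast
    then obtain z where z: "z \<in> akey sig H" "z \<notin> fd_closure (FD sig (q - {P})) (akey sig P)"
      using attacks_akey_not_subset_fd_closure[OF tree] by blast
    show ?case
    proof (cases "P = F")
      case True
      have "z \<in> fd_closure (FD sig (q - {F})) (akey sig F)"
        by (rule fd_closure.base) (use z(1) key in blast)
      then show ?thesis using z(2) True by simp
    next
      case False
      have "z \<in> avars H" "z \<in> avars F"
        using z(1) key akey_subset_avars[of sig H] akey_subset_avars[of sig F] by auto
      moreover have "z \<notin> Fplus sig q P" using z(2) by (simp add: Fplus_def fd_entails_def)
      ultimately have "attacks sig q \<tau> P F"
        using attacks_via_shared_var[OF join_tree P assms] False by blast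
      then show ?thesis using attacks_functional[OF P] H(2) by blast
    qed
  qed
  then show ?thesis by (auto simp: Fplus_def fd_entails_def)
qed

lemma shared_var_in_akey:
  assumes cycle1: "is_cycle sig q \<tau> cs1" and cycle2: "is_cycle sig q \<tau> cs2"
    and "set cs1 \<noteq> set cs2" and "F1 \<in> set cs1" "F2 \<in> set cs2"
    and "x \<in> avars F1" "x \<in> avars F2" and "F \<in> set cs1"
  shows "x \<in> akey sig F"
proof -
  have cycle: "graph_cycle (attacks sig q \<tau>) cs1"
    using cycle1 by (simp add: is_cycle_eq_graph_cycle)
  have F2_notin: "F2 \<notin> set cs1"
    using cycles_eq_if_common_atom[OF cycle1 cycle2 _ assms(5)] assms(3) by blast
  have F2_in: "F2 \<in> q"
    using graph_cycle_neighbours(1)[of "attacks sig q \<tau>" cs2 F2] cycle2 assms(5)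
    by (auto simp: is_cycle_eq_graph_cycle attacks_def)
  have attacker_key: "x \<in> akey sig E" if "E \<in> set cs1" "attacks sig q \<tau> E E'" "x \<in> avars E'" for E E'
  proof (rule ccontr)
    assume "x \<notin> akey sig E"
    moreover have "E \<in> q" using that(2) by (simp add: attacks_def)
    ultimately have "x \<notin> Fplus sig q E" using Fplus_subset_akey by blast
    then have "attacks sig q \<tau> E F2"
      using attacks_via_shared_var[OF join_tree that(2) F2_in _ that(3) assms(7)] F2_notin that(1)
      by blast
    then show False using attack_cycle_closed[OF cycle] that(1) F2_notin by blast
  qed
  have in_avars: "x \<in> avars G" if "G \<in> set cs1" for G
  proof -
    have "(attacks sig q \<tau>)\<^sup>*\<^sup>* G F1"
      using graph_cycle_rtranclp[OF cycle that assms(4)] .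
    then show ?thesis using that
    proof (induction rule: converse_rtranclp_induct)
      case base then show ?case using assms(6) by simp
    next
      case (step G G')
      then have "x \<in> avars G'" using attack_cycle_closed[OF cycle] by blast
      then show ?case
        using attacker_key[OF step.prems step.hyps(1)] akey_subset_avars[of sig G] by blast
    qed
  qed
  obtain F' where "F' \<in> set cs1" "attacks sig q \<tau> F F'"
    using graph_cycle_neighbours(1)[OF cycle assms(8)] by blast
  then show ?thesis using attacker_key assms(8) in_avars by blast
qed

lemma fd_closure_akey_in_avars:
  assumes "F \<in> q" "y \<in> fd_closure (FD sig q) (akey sig F)"
  shows "\<forall>A. (A = F \<or> attacks sig q \<tau> F A) \<longrightarrow> y \<in> akey sig A \<longrightarrow> y \<in> avars F"
  using assms(2)
proof (induction rule: fd_closure.induct)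
  case (base y)
  then show ?case using akey_subset_avars[of sig F] by blast
next
  case (step L R y)
  obtain H where H: "H \<in> q" "L = akey sig H" "R = avars H"
    using step.hyps(1) unfolding FD_def by blast
  show ?case
  proof (intro allI impI)
    fix A assume A: "A = F \<or> attacks sig q \<tau> F A" and "y \<in> akey sig A"
    then have yA: "y \<in> avars A" using akey_subset_avars[of sig A] by blast
    show "y \<in> avars F"
    proof (rule ccontr)
      assume y: "y \<notin> avars F"
      with A yA have attacks_A: "attacks sig q \<tau> F A" by blast
      have "y \<notin> Fplus sig q F"
        using y Fplus_subset_akey[OF assms(1)] akey_subset_avars[of sig F] by blast
      moreover have "y \<in> avars H" "H \<noteq> F" using step.hyps(2) H(3) y by auto
      ultimately have "attacks sig q \<tau> F H"
        using attacks_via_shared_var[OF join_tree attacks_A H(1)] yA by blast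
      then have "y \<in> L" using attacks_functional[OF attacks_A] H(2) \<open>y \<in> akey sig A\<close> by simp
      then show False using step.IH A \<open>y \<in> akey sig A\<close> y by blast
    qed
  qed
qed

lemma weak_attack_akey_subset_avars:
  assumes "weak_attack sig q \<tau> F G" shows "akey sig G \<subseteq> avars F"
proof
  fix y assume "y \<in> akey sig G"
  have attacks: "attacks sig q \<tau> F G" and "akey sig G \<subseteq> Foplus sig q F"
    using assms by (simp_all add: weak_attack_def)
  then have "y \<in> fd_closure (FD sig q) (akey sig F)"
    using \<open>y \<in> akey sig G\<close> by (auto simp: Foplus_def fd_entails_def)
  moreover have "F \<in> q" using attacks by (simp add: attacks_def)
  ultimately show "y \<in> avars F"
    using fd_closure_akey_in_avars attacks \<open>y \<in> akey sig G\<close> by blast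
qed

end

theorem lemma7:
  fixes sig :: "'r signature"
    and q :: "('r, 'v, 'c) atom set"
    and \<tau> :: "(('r, 'v, 'c) atom \<times> ('r, 'v, 'c) atom) set"
  assumes wf: "wf_query sig q"
    and jt: "join_tree q \<tau>"
    and terminal: "\<forall>cs. is_cycle sig q \<tau> cs \<longrightarrow> terminal_cycle sig q \<tau> cs"
    and cov: "\<forall>F\<in>q. \<exists>cs. is_cycle sig q \<tau> cs \<and> F \<in> set cs"
  shows "(\<forall>cs1 cs2 F1 F2 x.
            is_cycle sig q \<tau> cs1 \<and> is_cycle sig q \<tau> cs2 \<and> set cs1 \<noteq> set cs2
            \<and> F1 \<in> set cs1 \<and> F2 \<in> set cs2 \<and> x \<in> avars F1 \<and> x \<in> avars F2
            \<longrightarrow> (\<forall>F \<in> set cs1 \<union> set cs2. x \<in> akey sig F))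
       \<and> (\<forall>F G. weak_attack sig q \<tau> F G \<longrightarrow> akey sig G \<subseteq> avars F)"
proof -
  interpret terminal_attack_cycles sig q \<tau>
    using jt terminal cov by unfold_locales
  show ?thesis
    using shared_var_in_akey weak_attack_akey_subset_avars by blast
qed

end
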